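(* For every $p>0$ and every $\psi\in\mathcal H(V)$, $S_p(\psi)=\psi^{\top}L_p\psi$, where $L_p=D^{-1/2}(D_p-W_p)D^{-1/2}$ is built from $\psi$ as described in the context. In particular $S_2(\psi)=\psi^\top L\psi$ with $L=L_2=D^{-1/2}(D-W)D^{-1/2}$ independent of $\psi$.
   Context: Let $V$ be a finite nonempty set and $E_{un}$ a finite set of subsets of $V$ (hyperedges), each of cardinality at least $2$, with weights $w(e)>0$. Let $E$ be the set of all ordered tuples $e=[v_1,\dots,v_k]$ of distinct vertices whose underlying set belongs to $E_{un}$; write $w(e)$ for the weight of the underlying set, $\delta_e=k$ (also $\delta_e=|e|$ for $e\in E_{un}$), $e_{[1]}=v_1$. Degree $d(v)=\sum_{e\in E_{un}:\,v\in e}w(e)>0$, $D=\mathrm{diag}(d(v))$; $w(u,v)=\sum_{e\in E_{un}:\,u,v\in e}\frac{w(e)}{\delta_e-1}$ for $u\ne v$, $w(v,v)=0$, $W=(w(u,v))$. Gradient: $(\nabla\psi)([v_1,\dots,v_k])=\sqrt{\tfrac{w(e)}{k-1}}\sum_{i=1}^{k}\big(\tfrac{\psi(v_i)}{\sqrt{d(v_i)}}-\tfrac{\psi(v_1)}{\sqrt{d(v_1)}}\big)$. Node gradient norm: $\|\nabla\psi(v)\|=\big(\sum_{e\in E:\,e_{[1]}=v}\frac{(\nabla\psi)(e)^2}{\delta_e!}\big)^{1/2}$. $S_p(\psi)=\sum_{v\in V}\|\nabla\psi(v)\|^p$. Given $\psi$, let $g(v)=\|\nabla\psi(v)\|^{p-2}$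 if $\|\nabla\psi(v)\|>0$ and $g(v)=1$ otherwise; for $e\in E_{un}$, $\bar g_e=\frac1{\delta_e}\sum_{v'\in e}g(v')$; $w_p(u,v)=\sum_{e\in E_{un}:\,u,v\in e}\frac{w(e)}{\delta_e-1}(g(u)+g(v)-\bar g_e)$ for $u\neq v$, $w_p(v,v)=0$; $d_p(v)=d(v)g(v)-\sum_{e\in E_{un}:\,v\in e}\frac{w(e)}{\delta_e-1}(g(v)-\bar g_e)$; $W_p=(w_p(u,v))$, $D_p=\mathrm{diag}(d_p(v))$. *)

theory Defs
  imports Complex_Main
begin

definition deg :: "'v set set \<Rightarrow> ('v set \<Rightarrow> real) \<Rightarrow> 'v \<Rightarrow> real" where
  "deg Eun w v = (\<Sum>e\<in>{e\<in>Eun. v \<in> e}. w e)"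

definition wadj :: "'v set set \<Rightarrow> ('v set \<Rightarrow> real) \<Rightarrow> 'v \<Rightarrow> 'v \<Rightarrow> real" where
  "wadj Eun w u v = (if u = v then 0
     else (\<Sum>e\<in>{e\<in>Eun. u \<in> e \<and> v \<in> e}. w e / (real (card e) - 1)))"

definition otuples :: "'v set set \<Rightarrow> 'v list set" where
  "otuples Eun = {xs. distinct xs \<and> set xs \<in> Eun}"

definition grad :: "'v set set \<Rightarrow> ('v set \<Rightarrow> real) \<Rightarrow> ('v \<Rightarrow> real) \<Rightarrow> 'v list \<Rightarrow> real" where
  "grad Eun w \<psi> xs = sqrt (w (set xs) / (real (length xs) - 1)) *
     (\<Sum>x\<leftarrow>xs. \<psi> x / sqrt (deg Eun w x) - \<psi> (hd xs) / sqrt (deg Eun w (hd xs)))"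

definition nodegradnorm :: "'v set set \<Rightarrow> ('v set \<Rightarrow> real) \<Rightarrow> ('v \<Rightarrow> real) \<Rightarrow> 'v \<Rightarrow> real" where
  "nodegradnorm Eun w \<psi> v = sqrt (\<Sum>xs\<in>{xs\<in>otuples Eun. hd xs = v}.
      (grad Eun w \<psi> xs)^2 / (fact (length xs)))"

definition Sp :: "'v set \<Rightarrow> 'v set set \<Rightarrow> ('v set \<Rightarrow> real) \<Rightarrow> real \<Rightarrow> ('v \<Rightarrow> real) \<Rightarrow> real" where
  "Sp V Eun w p \<psi> = (\<Sum>v\<in>V. nodegradnorm Eun w \<psi> v powr p)"

definition gfun :: "'v set set \<Rightarrow> ('v set \<Rightarrow> real) \<Rightarrow> real \<Rightarrow> ('v \<Rightarrow> real) \<Rightarrow> 'v \<Rightarrow> real" where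
  "gfun Eun w p \<psi> v = (if nodegradnorm Eun w \<psi> v > 0
     then nodegradnorm Eun w \<psi> v powr (p - 2) else 1)"

definition gbar :: "'v set set \<Rightarrow> ('v set \<Rightarrow> real) \<Rightarrow> real \<Rightarrow> ('v \<Rightarrow> real) \<Rightarrow> 'v set \<Rightarrow> real" where
  "gbar Eun w p \<psi> e = (\<Sum>v'\<in>e. gfun Eun w p \<psi> v') / real (card e)"

definition wp :: "'v set set \<Rightarrow> ('v set \<Rightarrow> real) \<Rightarrow> real \<Rightarrow> ('v \<Rightarrow> real) \<Rightarrow> 'v \<Rightarrow> 'v \<Rightarrow> real" where
  "wp Eun w p \<psi> u v = (if u = v then 0
     else (\<Sum>e\<in>{e\<in>Eun. u \<in> e \<and> v \<in> e}. w e / (real (card e) - 1) *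
            (gfun Eun w p \<psi> u + gfun Eun w p \<psi> v - gbar Eun w p \<psi> e)))"

definition dp :: "'v set set \<Rightarrow> ('v set \<Rightarrow> real) \<Rightarrow> real \<Rightarrow> ('v \<Rightarrow> real) \<Rightarrow> 'v \<Rightarrow> real" where
  "dp Eun w p \<psi> v = deg Eun w v * gfun Eun w p \<psi> v -
     (\<Sum>e\<in>{e\<in>Eun. v \<in> e}. w e / (real (card e) - 1) * (gfun Eun w p \<psi> v - gbar Eun w p \<psi> e))"

definition Lp :: "'v set set \<Rightarrow> ('v set \<Rightarrow> real) \<Rightarrow> real \<Rightarrow> ('v \<Rightarrow> real) \<Rightarrow> 'v \<Rightarrow> 'v \<Rightarrow> real" where
  "Lp Eun w p \<psi> u v = ((if u = v then dp Eun w p \<psi> u else 0) - wp Eun w p \<psi> u v)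
      / (sqrt (deg Eun w u) * sqrt (deg Eun w v))"

definition Lap :: "'v set set \<Rightarrow> ('v set \<Rightarrow> real) \<Rightarrow> 'v \<Rightarrow> 'v \<Rightarrow> real" where
  "Lap Eun w u v = ((if u = v then deg Eun w u else 0) - wadj Eun w u v)
      / (sqrt (deg Eun w u) * sqrt (deg Eun w v))"

definition quadform :: "'v set \<Rightarrow> ('v \<Rightarrow> 'v \<Rightarrow> real) \<Rightarrow> ('v \<Rightarrow> real) \<Rightarrow> real" where
  "quadform V M \<psi> = (\<Sum>u\<in>V. \<Sum>v\<in>V. \<psi> u * M u v * \<psi> v)"

end

theory Submission
  imports Defs "HOL-Combinatorics.Multiset_Permutations"
begin

text \<open>Write \<open>\<phi> = D\<^sup>-\<^sup>1\<^sup>/\<^sup>2 \<psi>\<close>. An ordered hyperedge with first vertex \<open>v\<close> and underlying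
  set \<open>e\<close>, \<open>|e| = k\<close>, has gradient \<open>sqrt (w e / (k - 1)) * (\<Sum>x\<in>e. \<phi> x - k \<phi> v)\<close>, and there
  are \<open>(k - 1)!\<close> of them, so \<open>\<parallel>\<nabla>\<psi>(v)\<parallel>\<^sup>2\<close> is the sum over the hyperedges \<open>e \<ni> v\<close> of
  \<open>w e / (k - 1) * (\<Sum>x\<in>e. \<phi> x - k \<phi> v)\<^sup>2 / k\<close>. Since \<open>\<parallel>\<nabla>\<psi>(v)\<parallel>\<^sup>p = g(v) \<parallel>\<nabla>\<psi>(v)\<parallel>\<^sup>2\<close>,
  \<open>S\<^sub>p(\<psi>)\<close> becomes a sum over hyperedges. So does \<open>D\<^sub>p - W\<^sub>p\<close>: each hyperedge contributes
  the block \<open>w e / (k - 1) * (k diag g - (g u + g v - mean\<^sub>e g))\<close>, whose quadratic form at \<open>\<phi>\<close>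
  is \<open>(1/k) \<Sum>v\<in>e. g v (\<Sum>x\<in>e. \<phi> x - k \<phi> v)\<^sup>2\<close>, an identity between the moments
  \<open>\<Sum>g\<close>, \<open>\<Sum>\<phi>\<close>, \<open>\<Sum>g\<phi>\<close>, \<open>\<Sum>g\<phi>\<^sup>2\<close> of the hyperedge. For \<open>p = 2\<close> we have \<open>g = 1\<close>, and the
  blocks add up to \<open>D - W\<close>.\<close>

definition deg_scaled :: "'v set set \<Rightarrow> ('v set \<Rightarrow> real) \<Rightarrow> ('v \<Rightarrow> real) \<Rightarrow> 'v \<Rightarrow> real" where
  "deg_scaled Eun w \<psi> x = \<psi> x / sqrt (deg Eun w x)"

lemma edge_quadratic_form_identity:
  fixes g \<phi> :: "'a \<Rightarrow> real"
  assumes "finite e"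
  defines "k \<equiv> real (card e)"
  shows "(\<Sum>u\<in>e. \<Sum>v\<in>e. \<phi> u * ((if u = v then k * g u else 0) - (g u + g v - sum g e / k)) * \<phi> v)
       = (\<Sum>v\<in>e. g v * (sum \<phi> e - k * \<phi> v)^2) / k"
proof (cases "e = {}")
  case False
  then have "k > 0" using assms by (simp add: k_def card_gt_0_iff)
  define c where "c = sum g e / k"
  define s where "s = sum \<phi> e"
  define H where "H = (\<Sum>x\<in>e. g x * \<phi> x)"
  define P where "P = (\<Sum>x\<in>e. g x * \<phi> x ^ 2)"
  have diagonal: "(\<Sum>u\<in>e. \<Sum>v\<in>e. \<phi> u * (if u = v then k * g u else 0) * \<phi> v) = k * P"
    using assms by (simp add: P_def sum_distrib_left power2_eq_square mult_ac if_distrib if_distribR cong: if_cong)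
  have "(\<Sum>u\<in>e. \<Sum>v\<in>e. \<phi> u * (g u + g v - c) * \<phi> v)
      = (\<Sum>u\<in>e. \<Sum>v\<in>e. g u * \<phi> u * \<phi> v + \<phi> u * (g v * \<phi> v) - c * (\<phi> u * \<phi> v))"
    by (intro sum.cong) (simp_all add: algebra_simps)
  also have "\<dots> = 2 * H * s - c * s^2"
    by (simp add: sum.distrib sum_subtractf sum_product[symmetric] sum_distrib_left[of c, symmetric] H_def s_def power2_eq_square)
  finally have cross_terms: "(\<Sum>u\<in>e. \<Sum>v\<in>e. \<phi> u * (g u + g v - c) * \<phi> v) = 2 * H * s - c * s^2" .
  have "(\<Sum>v\<in>e. g v * (s - k * \<phi> v)^2)
      = (\<Sum>v\<in>e. s^2 * g v - 2 * k * s * (g v * \<phi> v) + k^2 * (g v * \<phi> v ^ 2))"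
    by (intro sum.cong) (simp_all add: power2_eq_square algebra_simps)
  also have "\<dots> = s^2 * sum g e - 2 * k * s * H + k^2 * P"
    by (simp add: sum.distrib sum_subtractf sum_distrib_left[symmetric] H_def P_def)
  finally have square: "(\<Sum>v\<in>e. g v * (s - k * \<phi> v)^2) = s^2 * sum g e - 2 * k * s * H + k^2 * P" .
  have "(\<Sum>u\<in>e. \<Sum>v\<in>e. \<phi> u * ((if u = v then k * g u else 0) - (g u + g v - c)) * \<phi> v)
      = (\<Sum>u\<in>e. \<Sum>v\<in>e. \<phi> u * (if u = v then k * g u else 0) * \<phi> v)
        - (\<Sum>u\<in>e. \<Sum>v\<in>e. \<phi> u * (g u + g v - c) * \<phi> v)"
    by (simp add: sum_subtractf[symmetric] algebra_simps)
  also have "\<dots> = k * P - (2 * H * s - c * s^2)"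
    by (simp only: diagonal cross_terms)
  finally show ?thesis
    using square \<open>k > 0\<close> by (simp add: c_def s_def field_simps power2_eq_square)
qed simp

lemma sum_incident_swap:
  assumes "finite V" "finite E" "\<forall>e\<in>E. e \<subseteq> V"
  shows "(\<Sum>v\<in>V. \<Sum>e | e \<in> E \<and> v \<in> e. f e v) = (\<Sum>e\<in>E. \<Sum>v\<in>e. f e v)"
proof -
  have "(\<Sum>v\<in>V. \<Sum>e | e \<in> E \<and> v \<in> e. f e v) = (\<Sum>e\<in>E. \<Sum>v | v \<in> V \<and> v \<in> e. f e v)"
    using assms(1,2) by (rule sum.swap_restrict)
  also have "\<dots> = (\<Sum>e\<in>E. \<Sum>v\<in>e. f e v)"
    using assms(3) by (intro sum.cong refl arg_cong2[where f = sum]) auto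
  finally show ?thesis .
qed

lemma sum_sum_incident_swap:
  assumes "finite V" "finite E" "\<forall>e\<in>E. e \<subseteq> V"
  shows "(\<Sum>u\<in>V. \<Sum>v\<in>V. \<Sum>e | e \<in> E \<and> u \<in> e \<and> v \<in> e. f e u v)
    = (\<Sum>e\<in>E. \<Sum>u\<in>e. \<Sum>v\<in>e. f e u v)"
proof -
  have "(\<Sum>v\<in>V. \<Sum>e | e \<in> E \<and> u \<in> e \<and> v \<in> e. f e u v)
      = (\<Sum>e | e \<in> E \<and> u \<in> e. \<Sum>v\<in>e. f e u v)" for u
    using sum_incident_swap[of V "{e \<in> E. u \<in> e}" "\<lambda>e v. f e u v"] assms
    by (simp add: conj_assoc)
  then have "(\<Sum>u\<in>V. \<Sum>v\<in>V. \<Sum>e | e \<in> E \<and> u \<in> e \<and> v \<in> e. f e u v)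
      = (\<Sum>u\<in>V. \<Sum>e | e \<in> E \<and> u \<in> e. \<Sum>v\<in>e. f e u v)"
    by simp
  also have "\<dots> = (\<Sum>e\<in>E. \<Sum>u\<in>e. \<Sum>v\<in>e. f e u v)"
    using assms by (rule sum_incident_swap)
  finally show ?thesis .
qed

lemma distinct_lists_with_hd_eq:
  assumes "v \<in> A"
  shows "{xs. distinct xs \<and> set xs = A \<and> hd xs = v} = (#) v ` permutations_of_set (A - {v})"
proof (intro set_eqI iffI)
  fix xs assume "xs \<in> {xs. distinct xs \<and> set xs = A \<and> hd xs = v}"
  then have xs: "distinct xs" "set xs = A" "hd xs = v" by simp_all
  then have "xs = v # tl xs"
    using assms by (cases xs) auto
  moreover have "tl xs \<in> permutations_of_set (A - {v})"
    using xs \<open>xs = v # tl xs\<close>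
    by (metis Diff_insert_absorb distinct.simps(2) list.simps(15) permutations_of_setI)
  ultimately show "xs \<in> (#) v ` permutations_of_set (A - {v})"
    by (rule image_eqI)
next
  fix xs assume "xs \<in> (#) v ` permutations_of_set (A - {v})"
  then obtain ys where "xs = v # ys" "set ys = A - {v}" "distinct ys"
    by (auto simp: permutations_of_set_def)
  then show "xs \<in> {xs. distinct xs \<and> set xs = A \<and> hd xs = v}"
    using assms by auto
qed

lemma card_distinct_lists_with_hd:
  assumes "finite A" "v \<in> A"
  shows "card {xs. distinct xs \<and> set xs = A \<and> hd xs = v} = fact (card A - 1)"
  using assms by (simp add: distinct_lists_with_hd_eq card_image)

lemma grad_distinct:
  assumes "distinct xs"
  shows "grad Eun w \<psi> xs = sqrt (w (set xs) / (real (card (set xs)) - 1)) *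
    (sum (deg_scaled Eun w \<psi>) (set xs) - real (card (set xs)) * deg_scaled Eun w \<psi> (hd xs))"
  using assms by (simp add: grad_def deg_scaled_def sum_list_distinct_conv_sum_set sum_subtractf distinct_card)

lemma sum_grad_sq_distinct_lists_with_hd:
  fixes Eun :: "'v set set" and w :: "'v set \<Rightarrow> real" and \<psi> :: "'v \<Rightarrow> real"
  assumes "finite e" "v \<in> e" "w e \<ge> 0"
  defines "k \<equiv> real (card e)" and "\<phi> \<equiv> deg_scaled Eun w \<psi>"
  shows "(\<Sum>xs | distinct xs \<and> set xs = e \<and> hd xs = v. (grad Eun w \<psi> xs)^2 / fact (length xs))
    = w e / (k - 1) * (sum \<phi> e - k * \<phi> v)^2 / k"
proof -
  have "k \<ge> 1" using assms by (auto simp: k_def Suc_le_eq card_gt_0_iff)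
  then have "(grad Eun w \<psi> xs)^2 / fact (length xs) = w e / (k - 1) * (sum \<phi> e - k * \<phi> v)^2 / fact (card e)"
    if "distinct xs \<and> set xs = e \<and> hd xs = v" for xs
    using that assms distinct_card[of xs] by (auto simp: grad_distinct power_mult_distrib k_def \<phi>_def)
  then have "(\<Sum>xs | distinct xs \<and> set xs = e \<and> hd xs = v. (grad Eun w \<psi> xs)^2 / fact (length xs))
    = fact (card e - 1) * (w e / (k - 1) * (sum \<phi> e - k * \<phi> v)^2 / fact (card e))"
    using card_distinct_lists_with_hd[OF assms(1,2)] by simp
  also have "fact (card e) = k * fact (card e - 1)"
    using \<open>k \<ge> 1\<close> by (simp add: k_def fact_reduce)
  finally show ?thesis by simp
qed

lemma nodegradnorm_sq:
  fixes Eun :: "'v set set" and w :: "'v set \<Rightarrow> real" and \<psi> :: "'v \<Rightarrow> real"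
  assumes "finite Eun" and "\<forall>e\<in>Eun. finite e \<and> e \<noteq> {} \<and> w e \<ge> 0"
  defines "\<phi> \<equiv> deg_scaled Eun w \<psi>"
  shows "(nodegradnorm Eun w \<psi> v)^2 = (\<Sum>e | e \<in> Eun \<and> v \<in> e.
    w e / (real (card e) - 1) * (sum \<phi> e - real (card e) * \<phi> v)^2 / real (card e))"
proof -
  define T where "T = {xs\<in>otuples Eun. hd xs = v}"
  define f where "f xs = (grad Eun w \<psi> xs)^2 / fact (length xs)" for xs
  have "T \<subseteq> \<Union> (permutations_of_set ` Eun)"
    by (auto simp: T_def otuples_def permutations_of_set_def)
  then have "finite T" using assms(1) by (simp add: finite_subset)
  have "set ` T \<subseteq> {e. e \<in> Eun \<and> v \<in> e}"
  proof
    fix e assume "e \<in> set ` T"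
    then obtain xs where xs: "set xs \<in> Eun" "hd xs = v" "e = set xs"
      by (auto simp: T_def otuples_def)
    then have "xs \<noteq> []" using assms(2) by auto
    with xs show "e \<in> {e. e \<in> Eun \<and> v \<in> e}" by auto
  qed
  have "(nodegradnorm Eun w \<psi> v)^2 = sum f T"
    unfolding nodegradnorm_def T_def f_def by (simp add: sum_nonneg)
  also have "\<dots> = (\<Sum>e | e \<in> Eun \<and> v \<in> e. sum f {xs \<in> T. set xs = e})"
    using \<open>finite T\<close> \<open>set ` T \<subseteq> _\<close> assms(1) by (simp add: sum.group)
  also have "\<dots> = (\<Sum>e | e \<in> Eun \<and> v \<in> e.
    w e / (real (card e) - 1) * (sum \<phi> e - real (card e) * \<phi> v)^2 / real (card e))"
  proof (rule sum.cong)
    fix e assume "e \<in> {e. e \<in> Eun \<and> v \<in> e}"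
    then have "{xs \<in> T. set xs = e} = {xs. distinct xs \<and> set xs = e \<and> hd xs = v}"
      by (auto simp: T_def otuples_def)
    then show "sum f {xs \<in> T. set xs = e}
      = w e / (real (card e) - 1) * (sum \<phi> e - real (card e) * \<phi> v)^2 / real (card e)"
      using assms \<open>e \<in> _\<close> sum_grad_sq_distinct_lists_with_hd[of e v w Eun \<psi>]
      by (simp add: f_def \<phi>_def)
  qed simp
  finally show ?thesis .
qed

lemma nodegradnorm_nonneg: "nodegradnorm Eun w \<psi> v \<ge> 0"
  unfolding nodegradnorm_def by (simp add: sum_nonneg)

lemma nodegradnorm_powr:
  "nodegradnorm Eun w \<psi> v powr p = gfun Eun w p \<psi> v * (nodegradnorm Eun w \<psi> v)^2"
proof (cases "nodegradnorm Eun w \<psi> v > 0")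
  case True
  have "nodegradnorm Eun w \<psi> v powr p = nodegradnorm Eun w \<psi> v powr (p - 2) * nodegradnorm Eun w \<psi> v powr 2"
    by (simp only: powr_add[symmetric] diff_add_cancel)
  with True show ?thesis
    by (simp add: gfun_def)
next
  case False
  \<comment> \<open>then both sides vanish, as \<open>0 powr p = 0\<close> for every \<open>p\<close>\<close>
  then have "nodegradnorm Eun w \<psi> v = 0"
    using nodegradnorm_nonneg[of Eun w \<psi> v] by linarith
  then show ?thesis
    by (simp add: gfun_def)
qed

lemma Sp_eq_sum_edges:
  fixes Eun :: "'v set set" and w :: "'v set \<Rightarrow> real" and \<psi> :: "'v \<Rightarrow> real" and p :: real
  assumes "finite V" "finite Eun" "\<forall>e\<in>Eun. e \<subseteq> V \<and> e \<noteq> {} \<and> w e \<ge> 0"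
  defines "\<phi> \<equiv> deg_scaled Eun w \<psi>" and "g \<equiv> gfun Eun w p \<psi>"
  shows "Sp V Eun w p \<psi> = (\<Sum>e\<in>Eun. w e / (real (card e) - 1) *
    (\<Sum>v\<in>e. g v * (sum \<phi> e - real (card e) * \<phi> v)^2) / real (card e))"
proof -
  have "\<forall>e\<in>Eun. finite e \<and> e \<noteq> {} \<and> w e \<ge> 0"
    using assms(1,3) finite_subset by blast
  then have "Sp V Eun w p \<psi> = (\<Sum>v\<in>V. \<Sum>e | e \<in> Eun \<and> v \<in> e.
      g v * (w e / (real (card e) - 1) * (sum \<phi> e - real (card e) * \<phi> v)^2 / real (card e)))"
    using assms(2) by (simp add: Sp_def nodegradnorm_powr nodegradnorm_sq sum_distrib_left g_def \<phi>_def)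
  also have "\<dots> = (\<Sum>e\<in>Eun. \<Sum>v\<in>e.
      g v * (w e / (real (card e) - 1) * (sum \<phi> e - real (card e) * \<phi> v)^2 / real (card e)))"
    using assms(1-3) by (simp add: sum_incident_swap)
  also have "\<dots> = (\<Sum>e\<in>Eun. w e / (real (card e) - 1) *
      (\<Sum>v\<in>e. g v * (sum \<phi> e - real (card e) * \<phi> v)^2) / real (card e))"
    by (simp add: sum_distrib_left sum_divide_distrib mult_ac)
  finally show ?thesis .
qed

lemma Dp_minus_Wp_eq_sum_edges:
  fixes Eun :: "'v set set" and w :: "'v set \<Rightarrow> real" and \<psi> :: "'v \<Rightarrow> real" and p :: real
  assumes "\<forall>e\<in>Eun. card e \<ge> 2"
  defines "g \<equiv> gfun Eun w p \<psi>"
  shows "(if u = v then dp Eun w p \<psi> u else 0) - wp Eun w p \<psi> u v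
    = (\<Sum>e | e \<in> Eun \<and> u \<in> e \<and> v \<in> e. w e / (real (card e) - 1) *
        ((if u = v then real (card e) * g u else 0) - (g u + g v - gbar Eun w p \<psi> e)))"
proof (cases "u = v")
  case True
  have "deg Eun w u * g u = (\<Sum>e | e \<in> Eun \<and> u \<in> e. w e / (real (card e) - 1) * ((real (card e) - 1) * g u))"
    unfolding deg_def sum_distrib_right using assms by (intro sum.cong refl) (auto simp: field_simps)
  then have "dp Eun w p \<psi> u = (\<Sum>e | e \<in> Eun \<and> u \<in> e.
      w e / (real (card e) - 1) * ((real (card e) - 1) * g u - (g u - gbar Eun w p \<psi> e)))"
    unfolding dp_def g_def by (simp only: right_diff_distrib sum_subtractf)
  also have "\<dots> = (\<Sum>e | e \<in> Eun \<and> u \<in> e.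
      w e / (real (card e) - 1) * (real (card e) * g u - (g u + g u - gbar Eun w p \<psi> e)))"
    by (simp add: algebra_simps)
  finally show ?thesis
    using True by (simp add: wp_def)
next
  case False
  then show ?thesis
    unfolding g_def by (simp add: wp_def sum_negf[symmetric] minus_divide_left algebra_simps)
qed

lemma quadform_Lp_eq_sum_edges:
  fixes Eun :: "'v set set" and w :: "'v set \<Rightarrow> real" and \<psi> :: "'v \<Rightarrow> real" and p :: real
  assumes "finite V" "finite Eun" "\<forall>e\<in>Eun. e \<subseteq> V \<and> card e \<ge> 2"
  defines "\<phi> \<equiv> deg_scaled Eun w \<psi>" and "g \<equiv> gfun Eun w p \<psi>"
  shows "quadform V (Lp Eun w p \<psi>) \<psi> = (\<Sum>e\<in>Eun. w e / (real (card e) - 1) *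
    (\<Sum>u\<in>e. \<Sum>v\<in>e. \<phi> u * ((if u = v then real (card e) * g u else 0)
      - (g u + g v - gbar Eun w p \<psi> e)) * \<phi> v))"
proof -
  have "\<psi> u * Lp Eun w p \<psi> u v * \<psi> v
      = \<phi> u * ((if u = v then dp Eun w p \<psi> u else 0) - wp Eun w p \<psi> u v) * \<phi> v" for u v
    \<comment> \<open>also where a degree vanishes, since \<open>x / 0 = 0\<close>\<close>
    by (simp add: Lp_def \<phi>_def deg_scaled_def field_simps)
  then have "quadform V (Lp Eun w p \<psi>) \<psi> = (\<Sum>u\<in>V. \<Sum>v\<in>V. \<Sum>e | e \<in> Eun \<and> u \<in> e \<and> v \<in> e.
      \<phi> u * (w e / (real (card e) - 1) * ((if u = v then real (card e) * g u else 0)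
        - (g u + g v - gbar Eun w p \<psi> e))) * \<phi> v)"
    using assms(3) unfolding g_def
    by (simp add: quadform_def Dp_minus_Wp_eq_sum_edges sum_distrib_left sum_distrib_right)
  also have "\<dots> = (\<Sum>e\<in>Eun. \<Sum>u\<in>e. \<Sum>v\<in>e.
      \<phi> u * (w e / (real (card e) - 1) * ((if u = v then real (card e) * g u else 0)
        - (g u + g v - gbar Eun w p \<psi> e))) * \<phi> v)"
    using assms(1-3) by (simp add: sum_sum_incident_swap)
  also have "\<dots> = (\<Sum>e\<in>Eun. w e / (real (card e) - 1) *
    (\<Sum>u\<in>e. \<Sum>v\<in>e. \<phi> u * ((if u = v then real (card e) * g u else 0)
      - (g u + g v - gbar Eun w p \<psi> e)) * \<phi> v))"
    by (simp add: sum_distrib_left mult_ac)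
  finally show ?thesis .
qed

lemma Sp_eq_quadform_Lp:
  assumes "finite V" "finite Eun" "\<forall>e\<in>Eun. e \<subseteq> V \<and> card e \<ge> 2 \<and> w e \<ge> 0"
  shows "Sp V Eun w p \<psi> = quadform V (Lp Eun w p \<psi>) \<psi>"
proof -
  have "\<forall>e\<in>Eun. finite e \<and> e \<noteq> {}"
    using assms(1,3) finite_subset by fastforce
  then show ?thesis
    using assms by (simp add: Sp_eq_sum_edges quadform_Lp_eq_sum_edges edge_quadratic_form_identity gbar_def)
qed

lemma Lp_two_eq_Lap:
  assumes "\<forall>e\<in>Eun. finite e"
  shows "Lp Eun w 2 \<psi> = Lap Eun w"
proof -
  have gfun_two: "gfun Eun w 2 \<psi> = (\<lambda>_. 1)"
    by (simp add: fun_eq_iff gfun_def)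
  have "gbar Eun w 2 \<psi> e = 1" if "e \<in> Eun" "u \<in> e" for e u
    using that assms by (auto simp: gbar_def gfun_two)
  then have "dp Eun w 2 \<psi> = deg Eun w" and "wp Eun w 2 \<psi> = wadj Eun w"
    by (auto simp: fun_eq_iff dp_def wp_def wadj_def gfun_two intro!: sum.neutral sum.cong)
  then show ?thesis
    by (simp add: fun_eq_iff Lp_def Lap_def)
qed

theorem proposition3:
  fixes V :: "'v set" and Eun :: "'v set set" and w :: "'v set \<Rightarrow> real"
    and p :: real and \<psi> :: "'v \<Rightarrow> real"
  assumes "finite V" and "V \<noteq> {}" and "finite Eun"
    and "\<forall>e\<in>Eun. e \<subseteq> V \<and> card e \<ge> 2"
    and "\<forall>e\<in>Eun. w e > 0"
    and "\<forall>v\<in>V. deg Eun w v > 0"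
    and "p > 0"
  shows "Sp V Eun w p \<psi> = quadform V (Lp Eun w p \<psi>) \<psi>
       \<and> Sp V Eun w 2 \<psi> = quadform V (Lap Eun w) \<psi>"
proof -
  have edges: "\<forall>e\<in>Eun. e \<subseteq> V \<and> card e \<ge> 2 \<and> w e \<ge> 0"
    using assms(4,5) by (simp add: less_imp_le)
  then have "\<forall>e\<in>Eun. finite e"
    using assms(1) finite_subset by blast
  then show ?thesis
    using Sp_eq_quadform_Lp[OF assms(1,3) edges] by (simp add: Lp_two_eq_Lap)
qed

end
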